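(* Let $\mathbf C$ be an admissible category of lattices. The adjunction $\mathbb P\dashv\mathrm{pt}$ between $\mathbf{Conv}$ and $(\mathbf C^{\mathrm{conv}})^{op}$ restricts to an adjunction between the category $\mathbf{Lim}$ of limit spaces and $(\mathbf C^{\mathrm{lim}})^{op}$, and also to an adjunction between $\mathbf{Lim}$ and $(\mathbf C^{\mathrm{lim}}_{\mathrm{cl}})^{op}$.
   Context: Setting: a filter on an inf-semilattice $L$ is a non-empty upward-closed subset closed under binary meets ($L$ allowed); $\mathbb F L$ is the set of filters. A category of lattices has lattices as objects and lattice morphisms; it is admissible if every powerset $\mathbb P(X)$ is an object and there are classes of index sets $\mathcal I,\mathcal J$ with morphisms exactly the monotone maps preserving existing $I$-indexed infima ($I\in\mathcal I$) and $J$-indexed suprema ($J\in\mathcal J$). A convergence $\mathbf C$-object is $(L,\lim_L)$ with $\lim_L:\mathbb F L\to L$ monotone; $\mathbf C^{\mathrm{conv}}$-morphisms are $\mathbf C$-morphisms $\varphi:L\to L'$ with $\lim_{L'}\mathcal F\le\varphi(\lim_L\varphi^{-1}(\mathcal F))$. Convergence spaces and $\mathbf{Conv}$: a set $X$ with relation $\to$ between filters of subsets and points, with $\{S:x\in S\}\to x$ and upward monotonicity in the filter; continuous maps preserve convergence via image filters. $\mathbb P(X)$ has $\lim\mathcal F=\{x:\mathcal F\to x\}$, $\mathbb P(f)=f^{-1}$. $\mathrm{pt}\,L$ is the set of $\mathbf C^{\mathrm{conv}}$-morphisms $L\to\{\emptyset,\{*\}\}$ (the latter with constant limit $\{*\}$),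 with $\ell^\bullet=\{\psi:\psi(\ell)=\{*\}\}$ and $\mathcal F\to\psi$ iff $\psi\in(\lim_L\{\ell:\ell^\bullet\in\mathcal F\})^\bullet$; $\mathrm{pt}\,\varphi(\psi)=\psi\circ\varphi$. It is known that $\mathbb P\dashv\mathrm{pt}$ is an adjunction between $\mathbf{Conv}$ and $(\mathbf C^{\mathrm{conv}})^{op}$. A limit space is a convergence space in which $\mathcal F\to x$ and $\mathcal G\to x$ imply $\mathcal F\cap\mathcal G\to x$; $\mathbf{Lim}$ is the full subcategory of $\mathbf{Conv}$ of limit spaces. A limit $\mathbf C$-object is a convergence $\mathbf C$-object with $\lim_L(\mathcal F\cap\mathcal G)=\lim_L\mathcal F\wedge\lim_L\mathcal G$ for all $\mathcal F,\mathcal G\in\mathbb F L$; $\mathbf C^{\mathrm{lim}}$ is the full subcategory of these. $\mathcal C_L$ is the set of complemented elements of $L$; a convergence $\mathbf C$-object is classical if for all filters $\mathcal F,\mathcal G$, $\mathcal F\cap\mathcal C_L=\mathcal G\cap\mathcal C_L$ implies $\lim_L\mathcal F=\lim_L\mathcal G$; $\mathbf C^{\mathrm{lim}}_{\mathrm{cl}}$ is the full subcategory of classical limit $\mathbf C$-objects. *)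

theory Defs
  imports Main
begin

text \<open>Lattices are modelled as types of class bounded_lattice (the whole type is the carrier).\<close>

definition lat_filter :: "'a::lattice set \<Rightarrow> bool" where
  "lat_filter F \<longleftrightarrow> F \<noteq> {} \<and> (\<forall>a\<in>F. \<forall>b. a \<le> b \<longrightarrow> b \<in> F)
     \<and> (\<forall>a\<in>F. \<forall>b\<in>F. inf a b \<in> F)"

definition is_inf_of :: "'a::order set \<Rightarrow> 'a \<Rightarrow> bool" where
  "is_inf_of A m \<longleftrightarrow> (\<forall>a\<in>A. m \<le> a) \<and> (\<forall>z. (\<forall>a\<in>A. z \<le> a) \<longrightarrow> z \<le> m)"

definition is_sup_of :: "'a::order set \<Rightarrow> 'a \<Rightarrow> bool" where
  "is_sup_of A m \<longleftrightarrow> (\<forall>a\<in>A. a \<le> m) \<and> (\<forall>z. (\<forall>a\<in>A. a \<le> z) \<longrightarrow> m \<le> z)"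

definition C_mor :: "'i set set \<Rightarrow> 'j set set \<Rightarrow> ('a::lattice \<Rightarrow> 'b::lattice) \<Rightarrow> bool" where
  "C_mor II JJ \<phi> \<longleftrightarrow> mono \<phi>
     \<and> (\<forall>I\<in>II. \<forall>(f::'i \<Rightarrow> 'a) m. is_inf_of (f ` I) m \<longrightarrow> is_inf_of (\<phi> ` f ` I) (\<phi> m))
     \<and> (\<forall>J\<in>JJ. \<forall>(f::'j \<Rightarrow> 'a) m. is_sup_of (f ` J) m \<longrightarrow> is_sup_of (\<phi> ` f ` J) (\<phi> m))"

text \<open>Index classes making the morphisms lattice morphisms (binary meets and joins, top).\<close>
definition admissible_index :: "'i set set \<Rightarrow> 'j set set \<Rightarrow> bool" where
  "admissible_index II JJ \<longleftrightarrow> {} \<in> II \<and> (\<exists>I\<in>II. card I = 2) \<and> (\<exists>J\<in>JJ. card J = 2)"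

definition conv_obj :: "('a::lattice set \<Rightarrow> 'a) \<Rightarrow> bool" where
  "conv_obj lim \<longleftrightarrow> (\<forall>F G. lat_filter F \<and> lat_filter G \<and> F \<subseteq> G \<longrightarrow> lim F \<le> lim G)"

definition limit_obj :: "('a::lattice set \<Rightarrow> 'a) \<Rightarrow> bool" where
  "limit_obj lim \<longleftrightarrow> conv_obj lim \<and>
     (\<forall>F G. lat_filter F \<and> lat_filter G \<longrightarrow> lim (F \<inter> G) = inf (lim F) (lim G))"

definition complemented :: "'a::bounded_lattice set" where
  "complemented = {l. \<exists>c. inf l c = bot \<and> sup l c = top}"

definition classical_obj :: "('a::bounded_lattice set \<Rightarrow> 'a) \<Rightarrow> bool" where
  "classical_obj lim \<longleftrightarrow> conv_obj lim \<and>
     (\<forall>F G. lat_filter F \<and> lat_filter G \<and> F \<inter> complemented = G \<inter> complemented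
        \<longrightarrow> lim F = lim G)"

definition conv_mor :: "'i set set \<Rightarrow> 'j set set \<Rightarrow> ('a::lattice set \<Rightarrow> 'a)
    \<Rightarrow> ('b::lattice set \<Rightarrow> 'b) \<Rightarrow> ('a \<Rightarrow> 'b) \<Rightarrow> bool" where
  "conv_mor II JJ lim lim' \<phi> \<longleftrightarrow> C_mor II JJ \<phi> \<and>
     (\<forall>F. lat_filter F \<longrightarrow> lim' F \<le> \<phi> (lim (\<phi> -` F)))"

definition set_filter :: "'x set \<Rightarrow> 'x set set \<Rightarrow> bool" where
  "set_filter S F \<longleftrightarrow> F \<subseteq> Pow S \<and> S \<in> F \<and> (\<forall>A\<in>F. \<forall>B. A \<subseteq> B \<and> B \<subseteq> S \<longrightarrow> B \<in> F)
     \<and> (\<forall>A\<in>F. \<forall>B\<in>F. A \<inter> B \<in> F)"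

definition conv_space :: "'x set \<Rightarrow> ('x set set \<Rightarrow> 'x \<Rightarrow> bool) \<Rightarrow> bool" where
  "conv_space S c \<longleftrightarrow> (\<forall>x\<in>S. c {A. A \<subseteq> S \<and> x \<in> A} x) \<and>
     (\<forall>F G x. set_filter S F \<and> set_filter S G \<and> x \<in> S \<and> F \<subseteq> G \<and> c F x \<longrightarrow> c G x)"

definition limit_space :: "'x set \<Rightarrow> ('x set set \<Rightarrow> 'x \<Rightarrow> bool) \<Rightarrow> bool" where
  "limit_space S c \<longleftrightarrow> conv_space S c \<and>
     (\<forall>F G x. set_filter S F \<and> set_filter S G \<and> x \<in> S \<and> c F x \<and> c G x \<longrightarrow> c (F \<inter> G) x)"

definition continuous_map :: "'x set \<Rightarrow> ('x set set \<Rightarrow> 'x \<Rightarrow> bool)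
    \<Rightarrow> 'y set \<Rightarrow> ('y set set \<Rightarrow> 'y \<Rightarrow> bool) \<Rightarrow> ('x \<Rightarrow> 'y) \<Rightarrow> bool" where
  "continuous_map S c S' c' f \<longleftrightarrow> f ` S \<subseteq> S' \<and>
     (\<forall>F x. set_filter S F \<and> x \<in> S \<and> c F x \<longrightarrow> c' {B. B \<subseteq> S' \<and> f -` B \<inter> S \<in> F} (f x))"

text \<open>P(X) for a convergence space on the whole type 'x.\<close>
definition pow_lim :: "('x set set \<Rightarrow> 'x \<Rightarrow> bool) \<Rightarrow> 'x set set \<Rightarrow> 'x set" where
  "pow_lim c F = {x. c F x}"

text \<open>The two-element object {emptyset, {*}} = P(unit), with constant limit {*}.\<close>
definition two_lim :: "unit set set \<Rightarrow> unit set" where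
  "two_lim F = {()}"

definition pt_points :: "'i set set \<Rightarrow> 'j set set \<Rightarrow> ('a::lattice set \<Rightarrow> 'a) \<Rightarrow> ('a \<Rightarrow> unit set) set" where
  "pt_points II JJ lim = {\<psi>. conv_mor II JJ lim two_lim \<psi>}"

definition pt_bullet :: "'i set set \<Rightarrow> 'j set set \<Rightarrow> ('a::lattice set \<Rightarrow> 'a) \<Rightarrow> 'a \<Rightarrow> ('a \<Rightarrow> unit set) set" where
  "pt_bullet II JJ lim l = {\<psi> \<in> pt_points II JJ lim. \<psi> l = {()}}"

definition pt_conv :: "'i set set \<Rightarrow> 'j set set \<Rightarrow> ('a::lattice set \<Rightarrow> 'a)
    \<Rightarrow> ('a \<Rightarrow> unit set) set set \<Rightarrow> ('a \<Rightarrow> unit set) \<Rightarrow> bool" where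
  "pt_conv II JJ lim F \<psi> \<longleftrightarrow> \<psi> \<in> pt_bullet II JJ lim (lim {l. pt_bullet II JJ lim l \<in> F})"

text \<open>Transpose of the adjunction: f : X -> pt L corresponds to l |-> f^{-1}(l^bullet).\<close>
definition adj_transpose :: "('x \<Rightarrow> 'a \<Rightarrow> unit set) \<Rightarrow> 'a \<Rightarrow> 'x set" where
  "adj_transpose f l = {x. f x l = {()}}"

end

(* Every element of a powerset is complemented, so P X is trivially classical, and the limit
   axiom of a limit space X is literally the limit axiom of P X. Since l |-> l^bullet preserves top
   and binary meets, F |-> {l. l^bullet in F} sends filters on pt L to filters on L and
   intersections to intersections, which transfers the limit axiom from L to pt L.
   The transposition f |-> (l |-> {x. f x l = {*}}) is a bijection between continuous maps
   X -> pt L and morphisms L -> P X for arbitrary convergence spaces X and convergence objects L: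
   infima and suprema of sets are computed pointwise, so a map into a powerset is a morphism iff
   each of its coordinates l |-> [x in phi l] into the two-element lattice is one. *)

theory Submission
  imports Defs
begin

lemma C_mor_top:
  fixes II :: "'i set set" and JJ :: "'j set set" and \<phi> :: "'a::bounded_lattice \<Rightarrow> 'b::bounded_lattice"
  assumes "admissible_index II JJ" and "C_mor II JJ \<phi>"
  shows "\<phi> top = top"
proof -
  have "{} \<in> II" using assms(1) unfolding admissible_index_def by blast
  moreover have "is_inf_of ((\<lambda>_::'i. top::'a) ` {}) top" unfolding is_inf_of_def by simp
  ultimately have "is_inf_of (\<phi> ` (\<lambda>_::'i. top::'a) ` {}) (\<phi> top)"
    using assms(2) unfolding C_mor_def by blast
  then show ?thesis unfolding is_inf_of_def by (simp add: top_le)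
qed

lemma C_mor_inf:
  fixes II :: "'i set set" and JJ :: "'j set set" and \<phi> :: "'a::lattice \<Rightarrow> 'b::lattice"
  assumes "admissible_index II JJ" and "C_mor II JJ \<phi>"
  shows "\<phi> (inf a b) = inf (\<phi> a) (\<phi> b)"
proof -
  obtain I where "I \<in> II" "card I = 2" using assms(1) unfolding admissible_index_def by blast
  then obtain i j where "I = {i, j}" "i \<noteq> j" by (auto simp: card_2_iff)
  define g where "g k = (if k = i then a else b)" for k
  have gI: "g ` I = {a, b}" using \<open>I = {i, j}\<close> \<open>i \<noteq> j\<close> unfolding g_def by auto
  have "is_inf_of (g ` I) (inf a b)" unfolding gI is_inf_of_def by simp
  then have "is_inf_of (\<phi> ` g ` I) (\<phi> (inf a b))"
    using assms(2) \<open>I \<in> II\<close> unfolding C_mor_def by blast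
  then have "is_inf_of {\<phi> a, \<phi> b} (\<phi> (inf a b))" unfolding gI by simp
  then show ?thesis unfolding is_inf_of_def by (auto intro!: antisym)
qed

lemma C_mor_mono: "C_mor II JJ \<phi> \<Longrightarrow> a \<le> b \<Longrightarrow> \<phi> a \<le> \<phi> b"
  unfolding C_mor_def by (auto dest: monoD)

lemma is_inf_of_set_iff: "is_inf_of (A :: 'x set set) m \<longleftrightarrow> m = \<Inter>A"
  unfolding is_inf_of_def by (meson Inter_greatest Inter_lower subset_antisym)

lemma is_sup_of_set_iff: "is_sup_of (A :: 'x set set) m \<longleftrightarrow> m = \<Union>A"
  unfolding is_sup_of_def by (meson Union_least Union_upper subset_antisym)

lemma C_mor_set_iff_pointwise:
  fixes \<psi> :: "'a::lattice \<Rightarrow> 'x set"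
  shows "C_mor II JJ \<psi> \<longleftrightarrow> (\<forall>x. C_mor II JJ (\<lambda>l. {u::unit. x \<in> \<psi> l}))"
proof -
  have unit_eq: "{u::unit. P} = {u. Q} \<longleftrightarrow> (P \<longleftrightarrow> Q)" for P Q by auto
  have le: "\<psi> a \<subseteq> \<psi> b \<longleftrightarrow> (\<forall>x. {u::unit. x \<in> \<psi> a} \<subseteq> {u. x \<in> \<psi> b})" for a b
    by auto
  have Inter: "\<psi> m = \<Inter>(\<psi> ` S) \<longleftrightarrow> (\<forall>x. {u::unit. x \<in> \<psi> m} = \<Inter>((\<lambda>l. {u. x \<in> \<psi> l}) ` S))"
    for m S
  proof -
    have pointwise: "\<Inter>((\<lambda>l. {u::unit. x \<in> \<psi> l}) ` S) = {u. x \<in> \<Inter>(\<psi> ` S)}" for x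
      by auto
    show ?thesis unfolding pointwise unit_eq by (rule set_eq_iff)
  qed
  have Union: "\<psi> m = \<Union>(\<psi> ` S) \<longleftrightarrow> (\<forall>x. {u::unit. x \<in> \<psi> m} = \<Union>((\<lambda>l. {u. x \<in> \<psi> l}) ` S))"
    for m S
  proof -
    have pointwise: "\<Union>((\<lambda>l. {u::unit. x \<in> \<psi> l}) ` S) = {u. x \<in> \<Union>(\<psi> ` S)}" for x
      by auto
    show ?thesis unfolding pointwise unit_eq by (rule set_eq_iff)
  qed
  show ?thesis
    unfolding C_mor_def mono_def is_inf_of_set_iff is_sup_of_set_iff le Inter Union
    by meson
qed

lemma lat_filter_iff_set_filter: "lat_filter (F :: 'x set set) \<longleftrightarrow> set_filter UNIV F"
  unfolding lat_filter_def set_filter_def by auto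

lemma lat_filter_top: "lat_filter (F :: 'a::bounded_lattice set) \<Longrightarrow> top \<in> F"
  unfolding lat_filter_def by auto

lemma lat_filter_Int:
  assumes "lat_filter F" and "lat_filter G"
  shows "lat_filter (F \<inter> G)"
proof -
  obtain a b where "a \<in> F" "b \<in> G" using assms unfolding lat_filter_def by (meson ex_in_conv)
  then have "sup a b \<in> F \<inter> G" using assms unfolding lat_filter_def by auto
  show ?thesis unfolding lat_filter_def
  proof (intro conjI ballI allI impI)
    show "F \<inter> G \<noteq> {}" using \<open>sup a b \<in> F \<inter> G\<close> by blast
  next
    fix c d assume "c \<in> F \<inter> G" "c \<le> d"
    then show "d \<in> F \<inter> G" using assms unfolding lat_filter_def by blast
  next
    fix c d assume "c \<in> F \<inter> G" "d \<in> F \<inter> G"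
    then show "inf c d \<in> F \<inter> G" using assms unfolding lat_filter_def by auto
  qed
qed

lemma set_filter_filtermap:
  fixes g :: "'u \<Rightarrow> 'x"
  assumes "lat_filter (F :: 'u set set)"
  shows "set_filter UNIV {A. g -` A \<in> F}"
  unfolding set_filter_def
proof (intro conjI ballI allI impI)
  show "UNIV \<in> {A. g -` A \<in> F}" using lat_filter_top[OF assms] by simp
next
  fix A B assume "A \<in> {A. g -` A \<in> F}" "A \<subseteq> B \<and> B \<subseteq> UNIV"
  then show "B \<in> {A. g -` A \<in> F}" using assms unfolding lat_filter_def by (blast dest: vimage_mono)
next
  fix A B assume "A \<in> {A. g -` A \<in> F}" "B \<in> {A. g -` A \<in> F}"
  then show "A \<inter> B \<in> {A. g -` A \<in> F}" using assms unfolding lat_filter_def by simp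
qed simp

section \<open>The convergence object P X\<close>

lemma conv_obj_pow_lim:
  assumes "conv_space UNIV c"
  shows "conv_obj (pow_lim c)"
  using assms unfolding conv_obj_def conv_space_def pow_lim_def lat_filter_iff_set_filter
  by blast

lemma limit_obj_pow_lim:
  fixes c :: "'x set set \<Rightarrow> 'x \<Rightarrow> bool"
  assumes "limit_space UNIV c"
  shows "limit_obj (pow_lim c)"
  unfolding limit_obj_def
proof (intro conjI allI impI)
  have conv: "conv_space UNIV c" using assms unfolding limit_space_def by blast
  then show "conv_obj (pow_lim c)" by (rule conv_obj_pow_lim)
  fix F G :: "'x set set"
  assume "lat_filter F \<and> lat_filter G"
  then have "lat_filter F" "lat_filter G" "lat_filter (F \<inter> G)" by (simp_all add: lat_filter_Int)
  then have "c (F \<inter> G) x \<longleftrightarrow> c F x \<and> c G x" for x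
    using assms conv unfolding limit_space_def conv_space_def lat_filter_iff_set_filter
    by (meson inf_le1 inf_le2 UNIV_I)
  then show "pow_lim c (F \<inter> G) = inf (pow_lim c F) (pow_lim c G)"
    unfolding pow_lim_def by auto
qed

lemma complemented_set_eq_UNIV: "(complemented :: 'x set set) = UNIV"
  unfolding complemented_def by (auto intro!: exI[of _ "- _"])

lemma classical_obj_pow_lim:
  assumes "conv_space UNIV c"
  shows "classical_obj (pow_lim c)"
  using conv_obj_pow_lim[OF assms] unfolding classical_obj_def complemented_set_eq_UNIV by simp

section \<open>The convergence space pt L\<close>

lemma unit_set_eq_singleton_iff: "(u :: unit set) = {()} \<longleftrightarrow> () \<in> u"
  by auto

lemma Collect_unit_mem: "{u::unit. () \<in> A} = A"
  by (simp add: set_eq_iff)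

lemma C_mor_if_in_pt_points: "\<psi> \<in> pt_points II JJ lim \<Longrightarrow> C_mor II JJ \<psi>"
  unfolding pt_points_def conv_mor_def by blast

lemma pt_bullet_subset: "pt_bullet II JJ lim l \<subseteq> pt_points II JJ lim"
  unfolding pt_bullet_def by blast

lemma pt_bullet_mono: "a \<le> b \<Longrightarrow> pt_bullet II JJ lim a \<subseteq> pt_bullet II JJ lim b"
  using C_mor_mono[OF C_mor_if_in_pt_points] unfolding pt_bullet_def by fastforce

lemma pt_bullet_top:
  assumes "admissible_index II JJ"
  shows "pt_bullet II JJ lim (top :: 'a::bounded_lattice) = pt_points II JJ lim"
  using C_mor_top[OF assms C_mor_if_in_pt_points] unfolding pt_bullet_def by auto

lemma pt_bullet_inf:
  assumes "admissible_index II JJ"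
  shows "pt_bullet II JJ lim (inf a b) = pt_bullet II JJ lim a \<inter> pt_bullet II JJ lim b"
proof -
  have "\<psi> (inf a b) = \<psi> a \<inter> \<psi> b" if "\<psi> \<in> pt_points II JJ lim" for \<psi>
    using C_mor_inf[OF assms C_mor_if_in_pt_points[OF that]] by simp
  then show ?thesis unfolding pt_bullet_def unit_set_eq_singleton_iff by auto
qed

lemma lat_filter_pt_bullet_preimage:
  fixes lim :: "'a::bounded_lattice set \<Rightarrow> 'a"
  assumes "admissible_index II JJ" and "set_filter (pt_points II JJ lim) F"
  shows "lat_filter {l. pt_bullet II JJ lim l \<in> F}"
  unfolding lat_filter_def
proof (intro conjI ballI allI impI)
  have "pt_points II JJ lim \<in> F" using assms(2) unfolding set_filter_def by blast
  then have "top \<in> {l. pt_bullet II JJ lim l \<in> F}" by (simp add: pt_bullet_top[OF assms(1), of lim])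
  then show "{l. pt_bullet II JJ lim l \<in> F} \<noteq> {}" by blast
next
  fix a b assume "a \<in> {l. pt_bullet II JJ lim l \<in> F}" "a \<le> b"
  moreover have "A \<in> F \<Longrightarrow> A \<subseteq> B \<Longrightarrow> B \<subseteq> pt_points II JJ lim \<Longrightarrow> B \<in> F" for A B
    using assms(2) unfolding set_filter_def by blast
  ultimately show "b \<in> {l. pt_bullet II JJ lim l \<in> F}"
    using pt_bullet_mono[of a b II JJ lim] pt_bullet_subset[of II JJ lim b] by blast
next
  fix a b assume "a \<in> {l. pt_bullet II JJ lim l \<in> F}" "b \<in> {l. pt_bullet II JJ lim l \<in> F}"
  moreover have "A \<in> F \<Longrightarrow> B \<in> F \<Longrightarrow> A \<inter> B \<in> F" for A B
    using assms(2) unfolding set_filter_def by blast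
  ultimately show "inf a b \<in> {l. pt_bullet II JJ lim l \<in> F}"
    by (simp add: pt_bullet_inf[OF assms(1)])
qed

lemma conv_space_pt:
  fixes lim :: "'a::bounded_lattice set \<Rightarrow> 'a"
  assumes adm: "admissible_index II JJ" and "conv_obj lim"
  shows "conv_space (pt_points II JJ lim) (pt_conv II JJ lim)"
  unfolding conv_space_def
proof (intro conjI ballI allI impI)
  fix \<psi> assume \<psi>: "\<psi> \<in> pt_points II JJ lim"
  have "lat_filter {{()}}" unfolding lat_filter_def by auto
  then have "{()} \<subseteq> \<psi> (lim (\<psi> -` {{()}}))"
    using \<psi> unfolding pt_points_def conv_mor_def two_lim_def by blast
  moreover have "{l. pt_bullet II JJ lim l \<in> {A. A \<subseteq> pt_points II JJ lim \<and> \<psi> \<in> A}} = \<psi> -` {{()}}"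
    using \<psi> unfolding pt_bullet_def by auto
  ultimately show "pt_conv II JJ lim {A. A \<subseteq> pt_points II JJ lim \<and> \<psi> \<in> A} \<psi>"
    using \<psi> unfolding pt_conv_def pt_bullet_def by auto
next
  fix F G \<psi>
  assume FG: "set_filter (pt_points II JJ lim) F \<and> set_filter (pt_points II JJ lim) G
    \<and> \<psi> \<in> pt_points II JJ lim \<and> F \<subseteq> G \<and> pt_conv II JJ lim F \<psi>"
  then have "{l. pt_bullet II JJ lim l \<in> F} \<subseteq> {l. pt_bullet II JJ lim l \<in> G}" by blast
  then have "lim {l. pt_bullet II JJ lim l \<in> F} \<le> lim {l. pt_bullet II JJ lim l \<in> G}"
    using FG \<open>conv_obj lim\<close> lat_filter_pt_bullet_preimage[OF adm] unfolding conv_obj_def by blast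
  then show "pt_conv II JJ lim G \<psi>"
    using FG pt_bullet_mono unfolding pt_conv_def by blast
qed

lemma limit_space_pt:
  fixes lim :: "'a::bounded_lattice set \<Rightarrow> 'a"
  assumes adm: "admissible_index II JJ" and "limit_obj lim"
  shows "limit_space (pt_points II JJ lim) (pt_conv II JJ lim)"
  unfolding limit_space_def
proof (intro conjI allI impI)
  show "conv_space (pt_points II JJ lim) (pt_conv II JJ lim)"
    using conv_space_pt[OF adm] \<open>limit_obj lim\<close> unfolding limit_obj_def by blast
  fix F G \<psi>
  assume FG: "set_filter (pt_points II JJ lim) F \<and> set_filter (pt_points II JJ lim) G
    \<and> \<psi> \<in> pt_points II JJ lim \<and> pt_conv II JJ lim F \<psi> \<and> pt_conv II JJ lim G \<psi>"
  have "{l. pt_bullet II JJ lim l \<in> F \<inter> G}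
      = {l. pt_bullet II JJ lim l \<in> F} \<inter> {l. pt_bullet II JJ lim l \<in> G}" by blast
  also have "lim \<dots> = inf (lim {l. pt_bullet II JJ lim l \<in> F}) (lim {l. pt_bullet II JJ lim l \<in> G})"
    using FG \<open>limit_obj lim\<close> lat_filter_pt_bullet_preimage[OF adm] unfolding limit_obj_def by blast
  finally have lim_Int: "lim {l. pt_bullet II JJ lim l \<in> F \<inter> G}
      = inf (lim {l. pt_bullet II JJ lim l \<in> F}) (lim {l. pt_bullet II JJ lim l \<in> G})" .
  show "pt_conv II JJ lim (F \<inter> G) \<psi>"
    using FG unfolding pt_conv_def lim_Int pt_bullet_inf[OF adm] by blast
qed

section \<open>The adjunction bijection\<close>

definition adj_untranspose :: "('a \<Rightarrow> 'x set) \<Rightarrow> 'x \<Rightarrow> 'a \<Rightarrow> unit set" where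
  "adj_untranspose \<phi> x l = {u. x \<in> \<phi> l}"

lemma adj_transpose_mem_iff: "x \<in> adj_transpose f l \<longleftrightarrow> () \<in> f x l"
  unfolding adj_transpose_def unit_set_eq_singleton_iff by simp

lemma adj_untranspose_adj_transpose: "adj_untranspose (adj_transpose f) = f"
  unfolding adj_untranspose_def adj_transpose_mem_iff Collect_unit_mem by simp

lemma adj_transpose_adj_untranspose: "adj_transpose (adj_untranspose \<phi>) = \<phi>"
  unfolding adj_transpose_def adj_untranspose_def by auto

lemma C_mor_adj_transpose_iff: "C_mor II JJ (adj_transpose f) \<longleftrightarrow> (\<forall>x. C_mor II JJ (f x))"
proof -
  have coordinate: "(\<lambda>l. {u::unit. x \<in> adj_transpose f l}) = f x" for x
    unfolding adj_transpose_mem_iff Collect_unit_mem ..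
  show ?thesis unfolding C_mor_set_iff_pointwise[of _ _ "adj_transpose f"] coordinate ..
qed

lemma vimage_pt_bullet:
  assumes "range f \<subseteq> pt_points II JJ lim"
  shows "f -` pt_bullet II JJ lim l = adj_transpose f l"
  using assms unfolding pt_bullet_def adj_transpose_def by auto

lemma continuous_map_pt_iff:
  assumes "range f \<subseteq> pt_points II JJ lim"
  shows "continuous_map UNIV c (pt_points II JJ lim) (pt_conv II JJ lim) f
    \<longleftrightarrow> (\<forall>F. lat_filter F \<longrightarrow> pow_lim c F \<subseteq> adj_transpose f (lim (adj_transpose f -` F)))"
proof -
  have "{l. pt_bullet II JJ lim l \<in> {B. B \<subseteq> pt_points II JJ lim \<and> f -` B \<inter> UNIV \<in> F}}
      = adj_transpose f -` F" for F
    using vimage_pt_bullet[OF assms] pt_bullet_subset[of II JJ lim] by auto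
  moreover have "f x \<in> pt_bullet II JJ lim l \<longleftrightarrow> x \<in> adj_transpose f l" for x l
    using vimage_pt_bullet[OF assms] by blast
  ultimately show ?thesis
    using assms unfolding continuous_map_def pt_conv_def pow_lim_def lat_filter_iff_set_filter
    by auto
qed

lemma in_pt_points_if_conv_mor_adj_transpose:
  fixes f :: "'x \<Rightarrow> 'a::bounded_lattice \<Rightarrow> unit set"
  assumes "conv_space UNIV c" and \<phi>: "conv_mor II JJ lim (pow_lim c) (adj_transpose f)"
  shows "f x \<in> pt_points II JJ lim"
  unfolding pt_points_def conv_mor_def mem_Collect_eq
proof (intro conjI allI impI)
  show "C_mor II JJ (f x)"
    using \<phi> unfolding conv_mor_def C_mor_adj_transpose_iff by blast
  fix F :: "unit set set"
  assume F: "lat_filter F"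
  \<comment> \<open>the image of F under the point x of X; it refines the principal filter of x\<close>
  define F' where "F' = {A. (\<lambda>_::unit. x) -` A \<in> F}"
  have F': "set_filter UNIV F'"
    unfolding F'_def by (rule set_filter_filtermap[OF F])
  have "set_filter UNIV {A. A \<subseteq> UNIV \<and> x \<in> A}" and "c {A. A \<subseteq> UNIV \<and> x \<in> A} x"
    using \<open>conv_space UNIV c\<close> unfolding set_filter_def conv_space_def by auto
  moreover have "{A. A \<subseteq> UNIV \<and> x \<in> A} \<subseteq> F'"
    using lat_filter_top[OF F] unfolding F'_def by auto
  ultimately have "c F' x"
    using F' \<open>conv_space UNIV c\<close> unfolding conv_space_def by blast
  then have "x \<in> adj_transpose f (lim (adj_transpose f -` F'))"
    using \<phi> F' unfolding conv_mor_def pow_lim_def lat_filter_iff_set_filter by blast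
  moreover have "(\<lambda>_::unit. x) -` adj_transpose f l = f x l" for l
    unfolding vimage_def adj_transpose_mem_iff Collect_unit_mem ..
  then have "adj_transpose f -` F' = f x -` F"
    unfolding F'_def vimage_Collect_eq by (simp only: vimage_def)
  ultimately show "two_lim F \<le> f x (lim (f x -` F))"
    unfolding two_lim_def adj_transpose_mem_iff by simp
qed

lemma continuous_map_pt_iff_conv_mor:
  fixes f :: "'x \<Rightarrow> 'a::bounded_lattice \<Rightarrow> unit set"
  assumes "conv_space UNIV c"
  shows "continuous_map UNIV c (pt_points II JJ lim) (pt_conv II JJ lim) f
    \<longleftrightarrow> conv_mor II JJ lim (pow_lim c) (adj_transpose f)"
proof
  assume cont: "continuous_map UNIV c (pt_points II JJ lim) (pt_conv II JJ lim) f"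
  then have pts: "range f \<subseteq> pt_points II JJ lim" unfolding continuous_map_def by blast
  then have "C_mor II JJ (adj_transpose f)"
    unfolding C_mor_adj_transpose_iff using C_mor_if_in_pt_points by blast
  then show "conv_mor II JJ lim (pow_lim c) (adj_transpose f)"
    using cont unfolding conv_mor_def continuous_map_pt_iff[OF pts] by blast
next
  assume \<phi>: "conv_mor II JJ lim (pow_lim c) (adj_transpose f)"
  then have pts: "range f \<subseteq> pt_points II JJ lim"
    using in_pt_points_if_conv_mor_adj_transpose[OF assms] by blast
  show "continuous_map UNIV c (pt_points II JJ lim) (pt_conv II JJ lim) f"
    using \<phi> unfolding conv_mor_def continuous_map_pt_iff[OF pts] by blast
qed

lemma bij_betw_adj_transpose:
  fixes c :: "'x set set \<Rightarrow> 'x \<Rightarrow> bool" and lim :: "'a::bounded_lattice set \<Rightarrow> 'a"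
  assumes "conv_space UNIV c"
  shows "bij_betw adj_transpose
    {f. continuous_map UNIV c (pt_points II JJ lim) (pt_conv II JJ lim) f}
    {\<phi>. conv_mor II JJ lim (pow_lim c) \<phi>}"
  by (rule bij_betw_byWitness[where f' = adj_untranspose])
    (auto simp: continuous_map_pt_iff_conv_mor[OF assms] adj_untranspose_adj_transpose
      adj_transpose_adj_untranspose)

theorem mainTheorem6:
  fixes II :: "'i set set" and JJ :: "'j set set"
  assumes "admissible_index II JJ"
  shows
    \<comment> \<open>P maps Lim into C^lim and into C^lim_cl\<close>
    "(\<forall>c :: 'x set set \<Rightarrow> 'x \<Rightarrow> bool. limit_space UNIV c \<longrightarrow>
         limit_obj (pow_lim c) \<and> (limit_obj (pow_lim c) \<and> classical_obj (pow_lim c)))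
     \<comment> \<open>pt maps C^lim and C^lim_cl into Lim\<close>
     \<and> (\<forall>lim :: 'a::bounded_lattice set \<Rightarrow> 'a. limit_obj lim \<longrightarrow>
         limit_space (pt_points II JJ lim) (pt_conv II JJ lim))
     \<and> (\<forall>lim :: 'a set \<Rightarrow> 'a. limit_obj lim \<and> classical_obj lim \<longrightarrow>
         limit_space (pt_points II JJ lim) (pt_conv II JJ lim))
     \<comment> \<open>the adjunction bijection restricts: Lim(X, pt L) = C^lim(L, P X)\<close>
     \<and> (\<forall>(c :: 'x set set \<Rightarrow> 'x \<Rightarrow> bool) (lim :: 'a set \<Rightarrow> 'a).
         limit_space UNIV c \<and> limit_obj lim \<longrightarrow>
         bij_betw adj_transpose
           {f. continuous_map UNIV c (pt_points II JJ lim) (pt_conv II JJ lim) f}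
           {\<phi>. conv_mor II JJ lim (pow_lim c) \<phi>})
     \<and> (\<forall>(c :: 'x set set \<Rightarrow> 'x \<Rightarrow> bool) (lim :: 'a set \<Rightarrow> 'a).
         limit_space UNIV c \<and> limit_obj lim \<and> classical_obj lim \<longrightarrow>
         bij_betw adj_transpose
           {f. continuous_map UNIV c (pt_points II JJ lim) (pt_conv II JJ lim) f}
           {\<phi>. conv_mor II JJ lim (pow_lim c) \<phi>})"
proof -
  have conv: "conv_space UNIV c" if "limit_space UNIV c" for c :: "'x set set \<Rightarrow> 'x \<Rightarrow> bool"
    using that unfolding limit_space_def by blast
  show ?thesis
    using limit_obj_pow_lim classical_obj_pow_lim[OF conv] limit_space_pt[OF assms]
      bij_betw_adj_transpose[OF conv]
    by blast
qed

end
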